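(* Let $\Sigma$ be a topologically mixing two-sided subshift of finite type with a Gibbs measure $\mu$ of a H\"older potential, $0<\theta<1$, $\nu=\mu\times\mathrm{Leb}$. If $\Phi\in\mathscr G$, then $\Phi$ is a global observable and $$\nu_{\mathrm{av}}(\Phi)=\int_\Sigma\eta_x(\{0\})\,d\mu(x),$$ where $\Phi(x)=\widehat{\eta_x}$.
   Context: $d_\theta(x,y)=\theta^{\max\{j:\ x_i=y_i\ \forall|i|<j\}}$. $\mathscr A$ is the set of Fourier–Stieltjes transforms $\widehat\eta(r)=\int e^{-ir\xi}d\eta(\xi)$ of complex Borel measures of finite total variation, normed by $\|\widehat\eta\|=\|\eta\|_{TV}$. $\mathscr G$ is the space of maps $\Phi\colon\Sigma\to\mathscr A$, H\"older w.r.t. $d_\theta$, with $\Phi(x)=\widehat{\eta_x}$ satisfying: there are $a,A>0$ with $|\eta_x|(\mathbb R\setminus[-r,r])\le Ar^{-a}$ for all $r\ge1$, $x\in\Sigma$. Such $\Phi$ is viewed as the function $\Phi(x,r)=[\Phi(x)](r)$ on $\Sigma\times\mathbb R$. A global observable is $\Phi\in L^\infty(\nu)$ for which $\nu_{\mathrm{av}}(\Phi)=\lim_{R\to\infty}\frac1{2R}\int_{\Sigma\times[-R,R]}\Phi\,d\nu$ exists. *)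

theory Defs
  imports "HOL-Analysis.Analysis"
begin

definition sft :: "nat \<Rightarrow> (nat \<Rightarrow> nat \<Rightarrow> bool) \<Rightarrow> (int \<Rightarrow> nat) set" where
  "sft k A = {x. \<forall>i. x i < k \<and> A (x i) (x (i + 1))}"

definition shift :: "(int \<Rightarrow> nat) \<Rightarrow> (int \<Rightarrow> nat)" where
  "shift x = (\<lambda>i. x (i + 1))"

text \<open>Topological mixing of the shift on S, with respect to the basis of symmetric cylinders.\<close>
definition topologically_mixing :: "(int \<Rightarrow> nat) set \<Rightarrow> bool" where
  "topologically_mixing S \<longleftrightarrow>
     (\<forall>x\<in>S. \<forall>y\<in>S. \<forall>m::nat. \<exists>N::nat. \<forall>n\<ge>N. \<exists>z\<in>S.
        (\<forall>i. \<bar>i\<bar> \<le> int m \<longrightarrow> z i = x i) \<and>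
        (\<forall>i. \<bar>i\<bar> \<le> int m \<longrightarrow> (shift ^^ n) z i = y i))"

definition dtheta :: "real \<Rightarrow> (int \<Rightarrow> nat) \<Rightarrow> (int \<Rightarrow> nat) \<Rightarrow> real" where
  "dtheta \<theta> x y = (if x = y then 0
     else \<theta> ^ (GREATEST j::nat. \<forall>i. \<bar>i\<bar> < int j \<longrightarrow> x i = y i))"

definition holder_on :: "real \<Rightarrow> (int \<Rightarrow> nat) set \<Rightarrow> ((int \<Rightarrow> nat) \<Rightarrow> real) \<Rightarrow> bool" where
  "holder_on \<theta> S f \<longleftrightarrow> (\<exists>K \<alpha>. \<alpha> > 0 \<and>
      (\<forall>x\<in>S. \<forall>y\<in>S. \<bar>f x - f y\<bar> \<le> K * dtheta \<theta> x y powr \<alpha>))"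

text \<open>Borel sigma-algebra on S (= product sigma-algebra restricted to S).\<close>
definition shift_space :: "(int \<Rightarrow> nat) set \<Rightarrow> (int \<Rightarrow> nat) measure" where
  "shift_space S = restrict_space (Pi\<^sub>M UNIV (\<lambda>_::int. count_space (UNIV::nat set))) S"

definition gibbs_measure ::
  "real \<Rightarrow> (int \<Rightarrow> nat) set \<Rightarrow> (int \<Rightarrow> nat) measure \<Rightarrow> ((int \<Rightarrow> nat) \<Rightarrow> real) \<Rightarrow> bool" where
  "gibbs_measure \<theta> S \<mu> \<phi> \<longleftrightarrow>
     sets \<mu> = sets (shift_space S) \<and> space \<mu> = S \<and> emeasure \<mu> (space \<mu>) = 1 \<and>
     (\<forall>B\<in>sets \<mu>. measure \<mu> (shift -` B \<inter> S) = measure \<mu> B) \<and>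
     holder_on \<theta> S \<phi> \<and>
     (\<exists>P C. C > 0 \<and> (\<forall>x\<in>S. \<forall>n::nat. n \<ge> 1 \<longrightarrow>
        (let c = measure \<mu> {y\<in>S. \<forall>i. 0 \<le> i \<and> i < int n \<longrightarrow> y i = x i};
             g = exp (- real n * P + (\<Sum>j<n. \<phi> ((shift ^^ j) x)))
         in inverse C \<le> c / g \<and> c / g \<le> C)))"

text \<open>A complex Borel measure eta on the reals, given by its polar decomposition
  d eta = h d|eta| with |eta| a finite Borel measure and |h| = 1.\<close>
definition polar_rep :: "real measure \<Rightarrow> (real \<Rightarrow> complex) \<Rightarrow> bool" where
  "polar_rep m h \<longleftrightarrow> sets m = sets borel \<and> finite_measure m \<and>
     h \<in> borel_measurable borel \<and> (\<forall>\<xi>. norm (h \<xi>) = 1)"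

definition fs_transform :: "real measure \<Rightarrow> (real \<Rightarrow> complex) \<Rightarrow> real \<Rightarrow> complex" where
  "fs_transform m h r = (\<integral>\<xi>. cis (- r * \<xi>) * h \<xi> \<partial>m)"

text \<open>Norm in the algebra of Fourier-Stieltjes transforms: total variation of the
  (unique) representing measure.\<close>
definition fs_norm :: "(real \<Rightarrow> complex) \<Rightarrow> real" where
  "fs_norm f = Inf {measure m UNIV | m h. polar_rep m h \<and> (\<forall>r. f r = fs_transform m h r)}"

text \<open>Membership in the class G; eta_x is represented by (M x, H x).\<close>
definition in_G ::
  "real \<Rightarrow> (int \<Rightarrow> nat) set \<Rightarrow> ((int \<Rightarrow> nat) \<Rightarrow> real \<Rightarrow> complex)
    \<Rightarrow> ((int \<Rightarrow> nat) \<Rightarrow> real measure) \<Rightarrow> ((int \<Rightarrow> nat) \<Rightarrow> real \<Rightarrow> complex) \<Rightarrow> bool" where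
  "in_G \<theta> S \<Phi> M H \<longleftrightarrow>
     (\<forall>x\<in>S. polar_rep (M x) (H x) \<and> (\<forall>r. \<Phi> x r = fs_transform (M x) (H x) r)) \<and>
     (\<exists>C \<alpha>. \<alpha> > 0 \<and> (\<forall>x\<in>S. \<forall>y\<in>S.
         fs_norm (\<lambda>r. \<Phi> x r - \<Phi> y r) \<le> C * dtheta \<theta> x y powr \<alpha>)) \<and>
     (\<exists>a A. a > 0 \<and> A > 0 \<and> (\<forall>x\<in>S. \<forall>r::real. r \<ge> 1 \<longrightarrow>
         measure (M x) (- {-r..r}) \<le> A * r powr (- a)))"

definition window_avg :: "('a \<times> real) measure \<Rightarrow> ('a \<times> real \<Rightarrow> complex) \<Rightarrow> real \<Rightarrow> complex" where
  "window_avg \<nu> F R = complex_of_real (1 / (2 * R)) *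
      (LINT p : {p \<in> space \<nu>. \<bar>snd p\<bar> \<le> R} | \<nu>. F p)"

definition global_observable :: "('a \<times> real) measure \<Rightarrow> ('a \<times> real \<Rightarrow> complex) \<Rightarrow> bool" where
  "global_observable \<nu> F \<longleftrightarrow> F \<in> borel_measurable \<nu> \<and> (\<exists>B. AE p in \<nu>. norm (F p) \<le> B) \<and>
     (\<exists>L. (window_avg \<nu> F \<longlongrightarrow> L) at_top)"

definition nu_av :: "('a \<times> real) measure \<Rightarrow> ('a \<times> real \<Rightarrow> complex) \<Rightarrow> complex" where
  "nu_av \<nu> F = Lim at_top (window_avg \<nu> F)"

end

theory Submission
  imports Defs "HOL-Probability.Sinc_Integral"
begin

text \<open>Averaging the transform of a single measure \<eta> over \<open>[-R, R]\<close> gives, by Fubini,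
  \<open>\<integral> sinc (R \<xi>) d\<eta>(\<xi>)\<close>, which tends to \<open>\<eta> {0}\<close> by dominated convergence. The Hoelder
  condition in the norm of the transform algebra also controls the sup norm, so \<Phi> is bounded and
  is a uniform limit of functions depending on finitely many coordinates of \<open>x\<close>, hence jointly
  measurable. Fubini and dominated convergence in \<open>x\<close> then reduce the window averages on
  \<open>\<Sigma> \<times> \<real>\<close> to those of the individual transforms.\<close>

section \<open>Fourier--Stieltjes transforms\<close>

lemma polar_rep_space: "polar_rep m h \<Longrightarrow> space m = UNIV"
  unfolding polar_rep_def by (metis sets_eq_imp_space_eq space_borel)

lemma measurable_polar_rep_iff:
  "polar_rep m h \<Longrightarrow> f \<in> measurable m N \<longleftrightarrow> f \<in> measurable borel N"
  unfolding polar_rep_def using measurable_cong_sets[of m borel N N] by simp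

lemma borel_measurable_cis [measurable]: "cis \<in> borel_measurable borel"
  by (intro borel_measurable_continuous_onI continuous_intros)

lemma integrable_fs_integrand:
  assumes "polar_rep m h"
  shows "integrable m (\<lambda>\<xi>. cis (- r * \<xi>) * h \<xi>)"
proof -
  interpret finite_measure m
    using assms by (simp add: polar_rep_def)
  show ?thesis
    using assms measurable_polar_rep_iff[OF assms]
    by (intro integrable_const_bound[where B=1]) (auto simp: polar_rep_def norm_mult)
qed

lemma norm_fs_transform_le: "polar_rep m h \<Longrightarrow> norm (fs_transform m h r) \<le> measure m UNIV"
proof -
  assume p: "polar_rep m h"
  then interpret finite_measure m unfolding polar_rep_def by auto
  have "norm (fs_transform m h r) \<le> (\<integral>\<xi>. norm (cis (- r * \<xi>) * h \<xi>) \<partial>m)"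
    unfolding fs_transform_def by (rule integral_norm_bound)
  also have "\<dots> = measure m UNIV"
    using p polar_rep_space[OF p] by (simp add: polar_rep_def norm_mult)
  finally show ?thesis .
qed

lemma borel_measurable_fs_transform:
  assumes "polar_rep m h"
  shows "fs_transform m h \<in> borel_measurable borel"
proof -
  interpret finite_measure m using assms by (simp add: polar_rep_def)
  have sp: "sets (borel \<Otimes>\<^sub>M m) = sets (borel \<Otimes>\<^sub>M borel)"
    using assms by (intro sets_pair_measure_cong) (auto simp: polar_rep_def)
  have "h \<in> borel_measurable borel"
    using assms by (simp add: polar_rep_def)
  then have "(\<lambda>(r, \<xi>). cis (- r * \<xi>) * h \<xi>) \<in> borel_measurable (borel \<Otimes>\<^sub>M borel)"
    by measurable
  then have "(\<lambda>(r, \<xi>). cis (- r * \<xi>) * h \<xi>) \<in> borel_measurable (borel \<Otimes>\<^sub>M m)"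
    by (simp add: measurable_cong_sets[OF sp refl])
  then show ?thesis
    unfolding fs_transform_def by (rule borel_measurable_lebesgue_integral)
qed

lemma norm_le_fs_norm:
  assumes "polar_rep m h" and "\<And>r. f r = fs_transform m h r"
  shows "norm (f r) \<le> fs_norm f"
  unfolding fs_norm_def
proof (rule cInf_greatest)
  show "{measure m UNIV |m h. polar_rep m h \<and> (\<forall>r. f r = fs_transform m h r)} \<noteq> {}"
    using assms by auto
next
  fix y assume "y \<in> {measure m UNIV |m h. polar_rep m h \<and> (\<forall>r. f r = fs_transform m h r)}"
  then obtain m' h' where "y = measure m' UNIV" "polar_rep m' h'" "f = fs_transform m' h'"
    by auto
  then show "norm (f r) \<le> y"
    by (simp add: norm_fs_transform_le)
qed

definition sum_measure :: "'a measure \<Rightarrow> 'a measure \<Rightarrow> 'a measure" where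
  "sum_measure M N = measure_of (space M) (sets M) (\<lambda>A. emeasure M A + emeasure N A)"

lemma sets_sum_measure [simp]: "sets (sum_measure M N) = sets M"
  by (simp add: sum_measure_def)

lemma emeasure_sum_measure:
  assumes "sets N = sets M" and "A \<in> sets M"
  shows "emeasure (sum_measure M N) A = emeasure M A + emeasure N A"
  unfolding sum_measure_def
proof (rule emeasure_measure_of_sigma[OF sets.sigma_algebra_axioms _ _ assms(2)])
  show "positive (sets M) (\<lambda>A. emeasure M A + emeasure N A)"
    by (simp add: positive_def)
  show "countably_additive (sets M) (\<lambda>A. emeasure M A + emeasure N A)"
    unfolding countably_additive_def
  proof (intro allI impI)
    fix F :: "nat \<Rightarrow> 'a set"
    assume "range F \<subseteq> sets M" "disjoint_family F"
    then have "(\<Sum>i. emeasure M (F i)) + (\<Sum>i. emeasure N (F i)) = emeasure M (\<Union>i. F i) + emeasure N (\<Union>i. F i)"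
      using assms(1) by (simp add: suminf_emeasure)
    then show "(\<Sum>i. emeasure M (F i) + emeasure N (F i)) = emeasure M (\<Union>i. F i) + emeasure N (\<Union>i. F i)"
      by (simp add: suminf_add[symmetric] summableI)
  qed
qed

lemma finite_measure_sum_measure:
  assumes "finite_measure M" "finite_measure N" "sets N = sets M"
  shows "finite_measure (sum_measure M N)"
proof (rule finite_measureI)
  have "space N = space M"
    using assms(3) by (rule sets_eq_imp_space_eq)
  then show "emeasure (sum_measure M N) (space (sum_measure M N)) \<noteq> \<infinity>"
    using assms by (simp add: emeasure_sum_measure sets_eq_imp_space_eq[OF sets_sum_measure] finite_measure.emeasure_finite)
qed

lemma absolutely_continuous_sum_measure:
  assumes "sets N = sets M"
  shows "absolutely_continuous (sum_measure M N) M" and "absolutely_continuous (sum_measure M N) N"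
  using assms by (auto simp: absolutely_continuous_def null_sets_def emeasure_sum_measure)

lemma (in sigma_finite_measure) Radon_Nikodym_real_density:
  assumes "finite_measure N" "absolutely_continuous M N" "sets N = sets M"
  obtains D where "D \<in> borel_measurable M" "\<And>x. 0 \<le> D x" "density M (\<lambda>x. ennreal (D x)) = N"
proof -
  obtain D where D: "D \<in> borel_measurable M" "AE x in M. RN_deriv M N x = ennreal (D x)" "\<And>x. 0 \<le> D x"
    using real_RN_deriv[OF assms] by metis
  have ae: "AE x in M. ennreal (D x) = RN_deriv M N x"
    using D(2) by (rule AE_mp) (simp add: eq_commute)
  have "density M (\<lambda>x. ennreal (D x)) = density M (RN_deriv M N)"
    using D(1) ae by (intro density_cong) simp_all
  also have "\<dots> = N"
    using assms by (simp add: density_RN_deriv)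
  finally show ?thesis
    by (rule that[OF D(1) D(3)])
qed

lemma fs_transform_density:
  assumes m: "sets m = sets borel" and d: "d \<in> borel_measurable borel" "\<And>\<xi>. 0 \<le> d \<xi>"
    and p: "polar_rep (density m d) h"
  shows "integrable m (\<lambda>\<xi>. cis (- r * \<xi>) * (d \<xi> *\<^sub>R h \<xi>))"
    and "fs_transform (density m d) h r = (\<integral>\<xi>. cis (- r * \<xi>) * (d \<xi> *\<^sub>R h \<xi>) \<partial>m)"
proof -
  have "h \<in> borel_measurable borel"
    using p by (simp add: polar_rep_def)
  then have meas: "(\<lambda>\<xi>. cis (- r * \<xi>) * h \<xi>) \<in> borel_measurable m" "d \<in> borel_measurable m"
    using d(1) unfolding measurable_cong_sets[OF m refl] by measurable
  from integrable_density[OF meas] d(2) show "integrable m (\<lambda>\<xi>. cis (- r * \<xi>) * (d \<xi> *\<^sub>R h \<xi>))"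
    using integrable_fs_integrand[OF p] by (simp add: mult_scaleR_right)
  from integral_density[OF meas] d(2)
  show "fs_transform (density m d) h r = (\<integral>\<xi>. cis (- r * \<xi>) * (d \<xi> *\<^sub>R h \<xi>) \<partial>m)"
    unfolding fs_transform_def by (simp add: mult_scaleR_right)
qed

lemma polar_rep_norm_density:
  fixes g :: "real \<Rightarrow> complex"
  assumes m: "finite_measure m" "sets m = sets borel" and g: "integrable m g"
  defines "h \<equiv> \<lambda>\<xi>. if g \<xi> = 0 then 1 else sgn (g \<xi>)"
  shows "polar_rep (density m (\<lambda>\<xi>. norm (g \<xi>))) h"
    and "fs_transform (density m (\<lambda>\<xi>. norm (g \<xi>))) h r = (\<integral>\<xi>. cis (- r * \<xi>) * g \<xi> \<partial>m)"
proof -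
  have gb: "g \<in> borel_measurable borel"
    using borel_measurable_integrable[OF g] by (simp add: measurable_cong_sets[OF m(2) refl])
  then have hb: "h \<in> borel_measurable borel"
    unfolding h_def by measurable
  have polar: "norm (g \<xi>) *\<^sub>R h \<xi> = g \<xi>" for \<xi>
    by (simp add: h_def scaleR_conv_of_real sgn_eq)
  have "emeasure (density m (\<lambda>\<xi>. norm (g \<xi>))) UNIV = (\<integral>\<^sup>+\<xi>. norm (g \<xi>) \<partial>m)"
    using g m(2) by (subst emeasure_density) (auto simp: sets_eq_imp_space_eq[OF m(2)])
  also have "\<dots> < \<infinity>"
    using g by (simp add: integrable_iff_bounded)
  finally have "finite_measure (density m (\<lambda>\<xi>. norm (g \<xi>)))"
    using m(2) by (intro finite_measureI) (simp add: sets_eq_imp_space_eq)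
  then show p: "polar_rep (density m (\<lambda>\<xi>. norm (g \<xi>))) h"
    unfolding polar_rep_def using m(2) hb by (simp add: h_def norm_sgn)
  show "fs_transform (density m (\<lambda>\<xi>. norm (g \<xi>))) h r = (\<integral>\<xi>. cis (- r * \<xi>) * g \<xi> \<partial>m)"
    using fs_transform_density(2)[OF m(2) _ _ p] gb by (simp add: polar)
qed

text \<open>The difference of two transforms is again a transform: both measures have real densities
  with respect to their sum, and the complex density of the difference is split into its modulus
  and its phase.\<close>

lemma fs_transform_diff_representable:
  assumes p1: "polar_rep m1 h1" and p2: "polar_rep m2 h2"
  obtains m h where "polar_rep m h"
    and "\<And>r. fs_transform m1 h1 r - fs_transform m2 h2 r = fs_transform m h r"
proof -
  define m where "m = sum_measure m1 m2"
  have s1: "sets m1 = sets borel" and s2: "sets m2 = sets borel"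
    and fin1: "finite_measure m1" and fin2: "finite_measure m2"
    using p1 p2 by (auto simp: polar_rep_def)
  have sm: "sets m = sets borel"
    using s1 by (simp add: m_def)
  interpret finite_measure m
    unfolding m_def using fin1 fin2 s1 s2 by (simp add: finite_measure_sum_measure)
  obtain d1 where d1: "d1 \<in> borel_measurable m" "\<And>\<xi>. 0 \<le> d1 \<xi>" "density m (\<lambda>\<xi>. ennreal (d1 \<xi>)) = m1"
    using Radon_Nikodym_real_density[OF fin1] absolutely_continuous_sum_measure s1 s2 sm
    unfolding m_def by metis
  obtain d2 where d2: "d2 \<in> borel_measurable m" "\<And>\<xi>. 0 \<le> d2 \<xi>" "density m (\<lambda>\<xi>. ennreal (d2 \<xi>)) = m2"
    using Radon_Nikodym_real_density[OF fin2] absolutely_continuous_sum_measure s1 s2 sm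
    unfolding m_def by metis
  have db: "d1 \<in> borel_measurable borel" "d2 \<in> borel_measurable borel"
    using d1 d2 by (simp_all add: measurable_cong_sets[OF sm refl])
  note t1 = fs_transform_density[OF sm db(1) d1(2), unfolded d1(3), OF p1]
  note t2 = fs_transform_density[OF sm db(2) d2(2), unfolded d2(3), OF p2]
  define g where "g \<xi> = d1 \<xi> *\<^sub>R h1 \<xi> - d2 \<xi> *\<^sub>R h2 \<xi>" for \<xi>
  have "integrable m g"
    unfolding g_def using t1(1)[of 0] t2(1)[of 0] by simp
  note polar = polar_rep_norm_density[OF finite_measure_axioms sm this]
  show ?thesis
  proof (rule that[OF polar(1)])
    fix r
    have "fs_transform m1 h1 r - fs_transform m2 h2 r = (\<integral>\<xi>. cis (- r * \<xi>) * g \<xi> \<partial>m)"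
      unfolding t1(2) t2(2) g_def right_diff_distrib using t1(1) t2(1)
      by (rule Bochner_Integration.integral_diff[symmetric])
    then show "fs_transform m1 h1 r - fs_transform m2 h2 r = fs_transform (density m (\<lambda>\<xi>. norm (g \<xi>))) (\<lambda>\<xi>. if g \<xi> = 0 then 1 else sgn (g \<xi>)) r"
      by (simp add: polar(2))
  qed
qed

section \<open>Window averages of a single transform\<close>

lemma abs_sinc_le_one: "\<bar>sinc x\<bar> \<le> 1"
  using abs_sin_x_le_abs_x[of x] by (auto simp: abs_divide divide_le_eq_1)

lemma abs_sinc_le_inverse: "x \<noteq> 0 \<Longrightarrow> \<bar>sinc x\<bar> \<le> 1 / \<bar>x\<bar>"
  by (simp add: abs_divide divide_right_mono)

lemma tendsto_sinc_scaled_at_top: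
  "((\<lambda>R. sinc (R * \<xi>)) \<longlongrightarrow> (if \<xi> = 0 then 1 else 0)) at_top"
proof (cases "\<xi> = 0")
  case False
  have "((\<lambda>R. 1 / \<bar>\<xi>\<bar> * inverse R) \<longlongrightarrow> 0) at_top"
    by (intro tendsto_mult_right_zero tendsto_inverse_0_at_top filterlim_ident)
  moreover have "\<forall>\<^sub>F R in at_top. norm (sinc (R * \<xi>)) \<le> 1 / \<bar>\<xi>\<bar> * inverse R"
    using eventually_gt_at_top[of 0]
  proof eventually_elim
    case (elim R)
    then show ?case
      using abs_sinc_le_inverse[of "R * \<xi>"] False by (simp add: abs_mult field_simps)
  qed
  ultimately show ?thesis
    using False by (simp add: Lim_null_comparison)
qed simp

lemma integral_cis_window:
  assumes "0 \<le> R"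
  shows "(\<integral>r. indicator {-R..R} r *\<^sub>R cis (- r * \<xi>) \<partial>lborel) = of_real (2 * R * sinc (R * \<xi>))"
proof (cases "\<xi> = 0 \<or> R = 0")
  case True
  then have "(\<integral>r. indicator {-R..R} r *\<^sub>R cis (- r * \<xi>) \<partial>lborel) = (\<integral>r. indicator {-R..R} r *\<^sub>R (1::complex) \<partial>lborel)"
    by (auto intro!: Bochner_Integration.integral_cong simp: indicator_def)
  also have "\<dots> = of_real (2 * R)"
    using assms by (simp add: scaleR_conv_of_real)
  finally show ?thesis
    using True by auto
next
  case False
  then have \<xi>: "\<xi> \<noteq> 0"
    by simp
  let ?F = "\<lambda>r. \<i> * cis (- r * \<xi>) / of_real \<xi>"
  have "(\<integral>r. indicator {-R..R} r *\<^sub>R cis (- r * \<xi>) \<partial>lborel) = (CLBINT r=-R..R. cis (- r * \<xi>))"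
    using assms by (simp add: interval_integral_Icc set_lebesgue_integral_def)
  also have "\<dots> = ?F R - ?F (-R)"
  proof (rule interval_integral_FTC_finite)
    show "continuous_on {min (-R) R..max (-R) R} (\<lambda>r. cis (- r * \<xi>))"
      by (intro continuous_intros)
    fix r
    have "((\<lambda>r. \<i> * exp (\<i> * of_real (- r * \<xi>)) / of_real \<xi>) has_vector_derivative exp (\<i> * of_real (- r * \<xi>)))
        (at r within {min (-R) R..max (-R) R})"
      using \<xi> by (auto intro!: derivative_eq_intros simp: Re_exp Im_exp has_vector_derivative_complex_iff field_simps)
    then show "(?F has_vector_derivative cis (- r * \<xi>)) (at r within {min (-R) R..max (-R) R})"
      by (simp add: cis_conv_exp)
  qed
  also have "\<dots> = of_real (2 * sin (R * \<xi>) / \<xi>)"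
    by (simp add: cis.ctr complex_eq_iff field_simps)
  finally show ?thesis
    using False by (simp add: field_simps)
qed

definition window_mean :: "(real \<Rightarrow> complex) \<Rightarrow> real \<Rightarrow> complex" where
  "window_mean g R = of_real (1 / (2 * R)) * (\<integral>r. indicator {-R..R} r *\<^sub>R g r \<partial>lborel)"

lemma window_mean_fs_transform:
  assumes p: "polar_rep m h" and R: "0 < R"
  shows "window_mean (fs_transform m h) R = (\<integral>\<xi>. sinc (R * \<xi>) *\<^sub>R h \<xi> \<partial>m)"
proof -
  interpret m: finite_measure m
    using p by (simp add: polar_rep_def)
  interpret pair_sigma_finite lborel m ..
  have sm: "sets m = sets borel" and hb: "h \<in> borel_measurable borel" and hn: "\<And>\<xi>. norm (h \<xi>) = 1"
    using p by (auto simp: polar_rep_def)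
  define f where "f r \<xi> = indicator {-R..R} r *\<^sub>R (cis (- r * \<xi>) * h \<xi>)" for r \<xi>
  have sp: "sets (lborel \<Otimes>\<^sub>M m) = sets (borel \<Otimes>\<^sub>M borel)"
    using sm by (intro sets_pair_measure_cong) auto
  have box: "{-R..R} \<times> UNIV \<in> sets (lborel \<Otimes>\<^sub>M m)"
    using sm by (intro pair_measureI) auto
  have "emeasure (lborel \<Otimes>\<^sub>M m) ({-R..R} \<times> UNIV) = emeasure lborel {-R..R} * emeasure m UNIV"
    using sm by (intro m.emeasure_pair_measure_Times) auto
  also have "\<dots> < \<infinity>"
  proof -
    have "emeasure m UNIV < \<infinity>"
      by (simp add: less_top[symmetric])
    then show ?thesis
      using R by (simp add: ennreal_mult_less_top)
  qed
  finally have "integrable (lborel \<Otimes>\<^sub>M m) (indicator ({-R..R} \<times> UNIV) :: real \<times> real \<Rightarrow> real)"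
    by (rule integrable_real_indicator[OF box])
  then have fint: "integrable (lborel \<Otimes>\<^sub>M m) (case_prod f)"
  proof (rule Bochner_Integration.integrable_bound)
    have "case_prod f \<in> borel_measurable (borel \<Otimes>\<^sub>M borel)"
      unfolding f_def using hb by measurable
    then show "case_prod f \<in> borel_measurable (lborel \<Otimes>\<^sub>M m)"
      by (simp only: measurable_cong_sets[OF sp refl])
    show "AE p in lborel \<Otimes>\<^sub>M m. norm (case_prod f p) \<le> norm (indicator ({-R..R} \<times> UNIV) p :: real)"
      by (intro AE_I2) (auto simp: f_def indicator_def norm_mult hn)
  qed
  have "(\<integral>r. indicator {-R..R} r *\<^sub>R fs_transform m h r \<partial>lborel) = (\<integral>r. (\<integral>\<xi>. f r \<xi> \<partial>m) \<partial>lborel)"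
    unfolding fs_transform_def f_def by simp
  also have "\<dots> = (\<integral>\<xi>. (\<integral>r. f r \<xi> \<partial>lborel) \<partial>m)"
    by (rule Fubini_integral[OF fint, symmetric])
  also have "\<dots> = (\<integral>\<xi>. of_real (2 * R) * (sinc (R * \<xi>) *\<^sub>R h \<xi>) \<partial>m)"
  proof (intro Bochner_Integration.integral_cong refl)
    fix \<xi>
    have "(\<integral>r. f r \<xi> \<partial>lborel) = (\<integral>r. (indicator {-R..R} r *\<^sub>R cis (- r * \<xi>)) * h \<xi> \<partial>lborel)"
      unfolding f_def by (simp add: scaleR_conv_of_real mult.assoc)
    also have "\<dots> = (\<integral>r. indicator {-R..R} r *\<^sub>R cis (- r * \<xi>) \<partial>lborel) * h \<xi>"
      by (rule integral_mult_left_zero)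
    finally show "(\<integral>r. f r \<xi> \<partial>lborel) = of_real (2 * R) * (sinc (R * \<xi>) *\<^sub>R h \<xi>)"
      using integral_cis_window[of R \<xi>] R by (simp add: scaleR_conv_of_real)
  qed
  also have "\<dots> = of_real (2 * R) * (\<integral>\<xi>. sinc (R * \<xi>) *\<^sub>R h \<xi> \<partial>m)"
    by (rule integral_mult_right_zero)
  finally show ?thesis
    unfolding window_mean_def using R by simp
qed

lemma tendsto_window_mean_fs_transform:
  assumes p: "polar_rep m h"
  shows "(window_mean (fs_transform m h) \<longlongrightarrow> h 0 * of_real (measure m {0})) at_top"
proof -
  interpret finite_measure m
    using p by (simp add: polar_rep_def)
  have sm: "sets m = sets borel" and hb: "h \<in> borel_measurable borel" and hn: "\<And>\<xi>. norm (h \<xi>) = 1"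
    using p by (auto simp: polar_rep_def)
  define f where "f \<xi> = (if \<xi> = 0 then 1 else 0) *\<^sub>R h \<xi>" for \<xi> :: real
  have lim: "((\<lambda>R. \<integral>\<xi>. sinc (R * \<xi>) *\<^sub>R h \<xi> \<partial>m) \<longlongrightarrow> integral\<^sup>L m f) at_top"
  proof (rule integral_dominated_convergence_at_top[where w="\<lambda>_. 1"])
    show "f \<in> borel_measurable m" "(\<lambda>\<xi>. sinc (R * \<xi>) *\<^sub>R h \<xi>) \<in> borel_measurable m" for R
      unfolding f_def measurable_cong_sets[OF sm refl] using hb by measurable
    show "\<forall>\<^sub>F R in at_top. AE \<xi> in m. norm (sinc (R * \<xi>) *\<^sub>R h \<xi>) \<le> 1"
      by (intro always_eventually allI AE_I2) (metis abs_sinc_le_one hn norm_scaleR mult_1_right)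
    show "AE \<xi> in m. ((\<lambda>R. sinc (R * \<xi>) *\<^sub>R h \<xi>) \<longlongrightarrow> f \<xi>) at_top"
      unfolding f_def by (intro AE_I2 tendsto_scaleR tendsto_sinc_scaled_at_top tendsto_const)
  qed simp
  have ev: "\<forall>\<^sub>F R in at_top. (\<integral>\<xi>. sinc (R * \<xi>) *\<^sub>R h \<xi> \<partial>m) = window_mean (fs_transform m h) R"
    using eventually_gt_at_top[of 0] by eventually_elim (simp add: window_mean_fs_transform[OF p])
  have "integral\<^sup>L m f = h 0 * of_real (measure m {0})"
  proof -
    have "integral\<^sup>L m f = (\<integral>\<xi>. indicator {0} \<xi> *\<^sub>R h 0 \<partial>m)"
      unfolding f_def by (intro Bochner_Integration.integral_cong) (auto simp: indicator_def)
    also have "\<dots> = measure m {0} *\<^sub>R h 0"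
      using sm by (intro has_bochner_integral_integral_eq has_bochner_integral_indicator)
        (auto simp: less_top[symmetric])
    finally show ?thesis
      by (simp add: scaleR_conv_of_real mult.commute)
  qed
  with Lim_transform_eventually[OF lim ev] show ?thesis
    by simp
qed

section \<open>Joint measurability on the shift space\<close>

lemma dtheta_nonneg: "0 \<le> \<theta> \<Longrightarrow> 0 \<le> dtheta \<theta> x y"
  by (simp add: dtheta_def)

lemma dtheta_le_one: "0 \<le> \<theta> \<Longrightarrow> \<theta> \<le> 1 \<Longrightarrow> dtheta \<theta> x y \<le> 1"
  by (simp add: dtheta_def power_le_one)

lemma dtheta_le_power_if_agree:
  assumes "0 \<le> \<theta>" "\<theta> \<le> 1" and agree: "\<And>i. \<bar>i\<bar> \<le> int n \<Longrightarrow> x i = y i"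
  shows "dtheta \<theta> x y \<le> \<theta> ^ n"
proof (cases "x = y")
  case False
  then obtain i0 where i0: "x i0 \<noteq> y i0"
    by auto
  let ?P = "\<lambda>j::nat. \<forall>i. \<bar>i\<bar> < int j \<longrightarrow> x i = y i"
  have "?P j \<Longrightarrow> j \<le> nat \<bar>i0\<bar>" for j
    using i0 by force
  moreover have "?P n"
    using agree by auto
  ultimately have "n \<le> (GREATEST j. ?P j)"
    by (intro Greatest_le_nat[of ?P n "nat \<bar>i0\<bar>"])
  then show ?thesis
    using False assms(1,2) by (simp add: dtheta_def power_decreasing)
qed (use assms in \<open>simp add: dtheta_def\<close>)

lemma measurable_map_PiM:
  fixes "is" :: "'i list"
  shows "(\<lambda>x. map x is) \<in> measurable (Pi\<^sub>M UNIV (\<lambda>_. count_space UNIV)) (count_space (UNIV :: 'a::countable list set))"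
proof (induction "is")
  case (Cons i "is")
  have "(\<lambda>x :: 'i \<Rightarrow> 'a. (x i, map x is)) \<in> measurable (Pi\<^sub>M UNIV (\<lambda>_. count_space UNIV)) (count_space UNIV \<Otimes>\<^sub>M count_space UNIV)"
    using Cons by (intro measurable_Pair) auto
  then have "(\<lambda>x :: 'i \<Rightarrow> 'a. (x i, map x is)) \<in> measurable (Pi\<^sub>M UNIV (\<lambda>_. count_space UNIV)) (count_space UNIV)"
    by (simp add: pair_measure_countable)
  from measurable_compose[OF this, of "\<lambda>(a, as). a # as"] show ?case
    by simp
qed simp

lemma holder_dist_le_power_if_agree:
  assumes \<theta>: "0 < \<theta>" "\<theta> < 1" and \<alpha>: "0 < \<alpha>"
    and holder: "dist (\<Phi> x r) (\<Phi> y r) \<le> C * dtheta \<theta> x y powr \<alpha>"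
    and agree: "\<And>i. \<bar>i\<bar> \<le> int n \<Longrightarrow> x i = y i"
  shows "dist (\<Phi> x r) (\<Phi> y r) \<le> \<bar>C\<bar> * (\<theta> powr \<alpha>) ^ n"
proof -
  have "dtheta \<theta> x y powr \<alpha> \<le> (\<theta> ^ n) powr \<alpha>"
    using \<theta> \<alpha> agree by (intro powr_mono2 dtheta_le_power_if_agree dtheta_nonneg) auto
  also have "\<dots> = (\<theta> powr \<alpha>) ^ n"
    using \<theta> by (simp add: powr_realpow[symmetric] powr_powr mult.commute)
  finally have "\<bar>C\<bar> * dtheta \<theta> x y powr \<alpha> \<le> \<bar>C\<bar> * (\<theta> powr \<alpha>) ^ n"
    by (rule mult_left_mono) simp
  moreover have "C * dtheta \<theta> x y powr \<alpha> \<le> \<bar>C\<bar> * dtheta \<theta> x y powr \<alpha>"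
    by (rule mult_right_mono) simp_all
  ultimately show ?thesis
    using holder by linarith
qed

lemma borel_measurable_case_prod_if_holder:
  fixes \<Phi> :: "(int \<Rightarrow> nat) \<Rightarrow> 'a \<Rightarrow> 'b::metric_space"
  assumes \<theta>: "0 < \<theta>" "\<theta> < 1" and \<alpha>: "0 < \<alpha>"
    and meas: "\<And>y. y \<in> S \<Longrightarrow> \<Phi> y \<in> borel_measurable N"
    and holder: "\<And>x y r. x \<in> S \<Longrightarrow> y \<in> S \<Longrightarrow> dist (\<Phi> x r) (\<Phi> y r) \<le> C * dtheta \<theta> x y powr \<alpha>"
  shows "(\<lambda>(x, r). \<Phi> x r) \<in> borel_measurable (shift_space S \<Otimes>\<^sub>M N)"
proof -
  define block where "block n x = map x [- int n..int n]" for n and x :: "int \<Rightarrow> nat"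
  define pick where "pick n l = (SOME y. y \<in> S \<and> block n y = l)" for n l
  have pick: "pick n (block n x) \<in> S \<and> block n (pick n (block n x)) = block n x" if "x \<in> S" for n x
    unfolding pick_def by (rule someI[where x = x]) (simp add: that)
  have space: "space (shift_space S \<Otimes>\<^sub>M N) = S \<times> space N"
    by (simp add: shift_space_def space_pair_measure space_restrict_space space_PiM)
  have block_meas: "(\<lambda>p. block n (fst p)) \<in> measurable (shift_space S \<Otimes>\<^sub>M N) (count_space (block n ` S))" for n
  proof -
    have "(\<lambda>x. block n x) \<in> measurable (shift_space S) (count_space UNIV)"
      unfolding block_def shift_space_def by (rule measurable_restrict_space1[OF measurable_map_PiM])
    then have "(\<lambda>p. block n (fst p)) \<in> measurable (shift_space S \<Otimes>\<^sub>M N) (count_space UNIV)"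
      by measurable
    then show ?thesis
      using space by (auto simp: measurable_count_space_eq2_countable)
  qed
  txt \<open>\<open>F n\<close> depends on \<open>x\<close> only through the finitely many coordinates \<open>block n x\<close>,
    so it is measurable, and by the Hoelder bound it converges to \<open>\<Phi>\<close> uniformly.\<close>
  define F where "F n p = \<Phi> (pick n (block n (fst p))) (snd p)" for n p
  have "F n \<in> borel_measurable (shift_space S \<Otimes>\<^sub>M N)" for n
    unfolding F_def
  proof (rule measurable_compose_countable'[OF _ block_meas])
    fix l assume "l \<in> block n ` S"
    then have "pick n l \<in> S"
      using pick by blast
    then show "(\<lambda>p. \<Phi> (pick n l) (snd p)) \<in> borel_measurable (shift_space S \<Otimes>\<^sub>M N)"
      using meas by measurable
  qed (simp add: countable_image)
  moreover have "(\<lambda>n. F n p) \<longlonglongrightarrow> (\<lambda>(x, r). \<Phi> x r) p" if pin: "p \<in> space (shift_space S \<Otimes>\<^sub>M N)" for p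
  proof -
    obtain x r where p: "p = (x, r)" and x: "x \<in> S"
      using pin space by auto
    have bound: "dist (F n p) (\<Phi> x r) \<le> \<bar>C\<bar> * (\<theta> powr \<alpha>) ^ n" for n
    proof (unfold F_def p fst_conv snd_conv, rule holder_dist_le_power_if_agree[OF \<theta> \<alpha>])
      show "dist (\<Phi> (pick n (block n x)) r) (\<Phi> x r) \<le> C * dtheta \<theta> (pick n (block n x)) x powr \<alpha>"
        using holder pick x by blast
      show "pick n (block n x) i = x i" if "\<bar>i\<bar> \<le> int n" for i
        using pick[OF x, of n] that by (auto simp: block_def map_eq_conv abs_le_iff)
    qed
    have "\<theta> powr \<alpha> < 1"
      using powr_less_mono2[of \<alpha> \<theta> 1] \<theta> \<alpha> by simp
    then have "(\<lambda>n. \<bar>C\<bar> * (\<theta> powr \<alpha>) ^ n) \<longlonglongrightarrow> 0"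
      by (intro tendsto_mult_right_zero LIMSEQ_power_zero) simp
    then have "(\<lambda>n. dist (F n p) (\<Phi> x r)) \<longlonglongrightarrow> 0"
      by (rule Lim_null_comparison[rotated]) (simp add: bound)
    then have "(\<lambda>n. F n p) \<longlonglongrightarrow> \<Phi> x r"
      by (rule tendsto_dist_iff[THEN iffD2])
    then show ?thesis
      by (simp add: p)
  qed
  ultimately show ?thesis
    by (rule borel_measurable_LIMSEQ_metric)
qed

section \<open>Window averages on the product space\<close>

lemma norm_window_mean_le:
  assumes g: "g \<in> borel_measurable lborel" and B: "\<And>r. norm (g r) \<le> B" and R: "0 < R"
  shows "norm (window_mean g R) \<le> B"
proof -
  have int_B: "integrable lborel (\<lambda>r. B * indicator {-R..R} r :: real)"
    using R by (intro integrable_mult_right integrable_real_indicator) auto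
  have "0 \<le> B"
    using B[of 0] norm_ge_zero order_trans by blast
  moreover have "(\<lambda>r. indicator {-R..R} r *\<^sub>R g r) \<in> borel_measurable lborel"
    using g by measurable
  ultimately have "integrable lborel (\<lambda>r. indicator {-R..R} r *\<^sub>R g r)"
    using B by (intro Bochner_Integration.integrable_bound[OF int_B]) (auto simp: indicator_def)
  then have "norm (\<integral>r. indicator {-R..R} r *\<^sub>R g r \<partial>lborel) \<le> (\<integral>r. B * indicator {-R..R} r \<partial>lborel)"
    by (rule Bochner_Integration.integral_norm_bound_integral[OF _ int_B]) (use B in \<open>auto simp: indicator_def\<close>)
  also have "\<dots> = B * (2 * R)"
    using R by simp
  finally show ?thesis
    using R by (simp add: window_mean_def norm_mult norm_divide field_simps)
qed

lemma window_avg_eq_integral_window_mean: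
  fixes \<mu> :: "'a measure"
  assumes "finite_measure \<mu>" and F: "F \<in> borel_measurable (\<mu> \<Otimes>\<^sub>M lborel)"
    and B: "\<And>p. p \<in> space (\<mu> \<Otimes>\<^sub>M lborel) \<Longrightarrow> norm (F p) \<le> B" and R: "0 \<le> R"
  shows "window_avg (\<mu> \<Otimes>\<^sub>M lborel) F R = (\<integral>x. window_mean (\<lambda>r. F (x, r)) R \<partial>\<mu>)"
proof -
  interpret finite_measure \<mu> by fact
  interpret pair_sigma_finite \<mu> lborel ..
  let ?W = "space \<mu> \<times> {-R..R}"
  have W: "{p \<in> space (\<mu> \<Otimes>\<^sub>M lborel). \<bar>snd p\<bar> \<le> R} = ?W"
    by (auto simp: space_pair_measure)
  have "emeasure (\<mu> \<Otimes>\<^sub>M lborel) ?W = emeasure \<mu> (space \<mu>) * emeasure lborel {-R..R}"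
    by (intro lborel.emeasure_pair_measure_Times) auto
  also have "\<dots> < \<infinity>"
    using R by (simp add: ennreal_mult_eq_top_iff less_top[symmetric])
  finally have "integrable (\<mu> \<Otimes>\<^sub>M lborel) (\<lambda>p. B * indicator ?W p :: real)"
    by (intro integrable_mult_right integrable_real_indicator) auto
  then have int: "integrable (\<mu> \<Otimes>\<^sub>M lborel) (\<lambda>p. indicator ?W p *\<^sub>R F p)"
    by (rule Bochner_Integration.integrable_bound)
      (use F in \<open>auto simp: indicator_def intro!: AE_I2 intro: order_trans[OF B abs_ge_self]\<close>)
  have "window_avg (\<mu> \<Otimes>\<^sub>M lborel) F R = of_real (1 / (2 * R)) * (\<integral>p. indicator ?W p *\<^sub>R F p \<partial>\<mu> \<Otimes>\<^sub>M lborel)"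
    unfolding window_avg_def set_lebesgue_integral_def W ..
  also have "(\<integral>p. indicator ?W p *\<^sub>R F p \<partial>\<mu> \<Otimes>\<^sub>M lborel) = (\<integral>x. (\<integral>r. indicator ?W (x, r) *\<^sub>R F (x, r) \<partial>lborel) \<partial>\<mu>)"
    using integral_fst'[OF int] by simp
  also have "\<dots> = (\<integral>x. (\<integral>r. indicator {-R..R} r *\<^sub>R F (x, r) \<partial>lborel) \<partial>\<mu>)"
    by (intro Bochner_Integration.integral_cong refl) (simp add: indicator_def)
  finally show ?thesis
    unfolding window_mean_def by simp
qed

lemma tendsto_window_avg:
  fixes \<mu> :: "'a measure"
  assumes "finite_measure \<mu>" and F: "F \<in> borel_measurable (\<mu> \<Otimes>\<^sub>M lborel)"
    and B: "\<And>p. p \<in> space (\<mu> \<Otimes>\<^sub>M lborel) \<Longrightarrow> norm (F p) \<le> B"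
    and lim: "\<And>x. x \<in> space \<mu> \<Longrightarrow> (window_mean (\<lambda>r. F (x, r)) \<longlongrightarrow> f x) at_top"
  shows "(window_avg (\<mu> \<Otimes>\<^sub>M lborel) F \<longlongrightarrow> integral\<^sup>L \<mu> f) at_top"
proof -
  interpret finite_measure \<mu> by fact
  interpret pair_sigma_finite \<mu> lborel ..
  have mean_meas: "(\<lambda>x. window_mean (\<lambda>r. F (x, r)) R) \<in> borel_measurable \<mu>" for R
  proof -
    have "(\<lambda>p. indicator {-R..R} (snd p) *\<^sub>R F p) \<in> borel_measurable (\<mu> \<Otimes>\<^sub>M lborel)"
      using F by measurable
    then have "(\<lambda>x. \<integral>r. indicator {-R..R} r *\<^sub>R F (x, r) \<partial>lborel) \<in> borel_measurable \<mu>"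
      by (intro lborel.borel_measurable_lebesgue_integral) (simp add: case_prod_beta')
    then show ?thesis
      unfolding window_mean_def by measurable
  qed
  have "f \<in> borel_measurable \<mu>"
  proof (rule borel_measurable_LIMSEQ_metric[OF mean_meas])
    fix x assume "x \<in> space \<mu>"
    then show "(\<lambda>n. window_mean (\<lambda>r. F (x, r)) (real n)) \<longlonglongrightarrow> f x"
      by (rule filterlim_compose[OF lim filterlim_real_sequentially])
  qed
  then have "((\<lambda>R. \<integral>x. window_mean (\<lambda>r. F (x, r)) R \<partial>\<mu>) \<longlongrightarrow> integral\<^sup>L \<mu> f) at_top"
  proof (rule integral_dominated_convergence_at_top[where w = "\<lambda>_. B"])
    show "\<forall>\<^sub>F R in at_top. AE x in \<mu>. norm (window_mean (\<lambda>r. F (x, r)) R) \<le> B"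
      using eventually_gt_at_top[of 0]
    proof eventually_elim
      case (elim R)
      show ?case
      proof (intro AE_I2 norm_window_mean_le)
        fix x assume "x \<in> space \<mu>"
        then show "norm (F (x, r)) \<le> B" for r
          using B by (simp add: space_pair_measure)
        show "(\<lambda>r. F (x, r)) \<in> borel_measurable lborel"
          using F \<open>x \<in> space \<mu>\<close> by measurable
      qed (use elim in simp)
    qed
  qed (use mean_meas lim in auto)
  moreover have "\<forall>\<^sub>F R in at_top. (\<integral>x. window_mean (\<lambda>r. F (x, r)) R \<partial>\<mu>) = window_avg (\<mu> \<Otimes>\<^sub>M lborel) F R"
    using eventually_ge_at_top[of 0]
    by eventually_elim (simp add: window_avg_eq_integral_window_mean[OF assms(1) F B])
  ultimately show ?thesis
    by (rule Lim_transform_eventually)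
qed

lemma global_observable_nu_avI:
  assumes "F \<in> borel_measurable \<nu>" and "\<And>p. p \<in> space \<nu> \<Longrightarrow> norm (F p) \<le> B"
    and lim: "(window_avg \<nu> F \<longlongrightarrow> L) at_top"
  shows "global_observable \<nu> F \<and> nu_av \<nu> F = L"
  unfolding global_observable_def nu_av_def
  using assms tendsto_Lim[OF trivial_limit_at_top_linorder lim] by (blast intro: AE_I2)

lemma in_G_norm_diff_le:
  assumes "in_G \<theta> S \<Phi> M H"
  shows "\<exists>C \<alpha>. 0 < \<alpha> \<and> (\<forall>x\<in>S. \<forall>y\<in>S. \<forall>r. norm (\<Phi> x r - \<Phi> y r) \<le> C * dtheta \<theta> x y powr \<alpha>)"
proof -
  have rep: "\<And>x. x \<in> S \<Longrightarrow> polar_rep (M x) (H x)"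
    and \<Phi>: "\<And>x. x \<in> S \<Longrightarrow> \<Phi> x = fs_transform (M x) (H x)"
    using assms unfolding in_G_def by auto
  obtain C \<alpha> where \<alpha>: "0 < \<alpha>"
    and holder: "\<And>x y. x \<in> S \<Longrightarrow> y \<in> S \<Longrightarrow> fs_norm (\<lambda>r. \<Phi> x r - \<Phi> y r) \<le> C * dtheta \<theta> x y powr \<alpha>"
    using assms unfolding in_G_def by blast
  have "norm (\<Phi> x r - \<Phi> y r) \<le> C * dtheta \<theta> x y powr \<alpha>" if xy: "x \<in> S" "y \<in> S" for x y r
  proof -
    obtain m h where mh: "polar_rep m h"
      and diff: "\<And>r. fs_transform (M x) (H x) r - fs_transform (M y) (H y) r = fs_transform m h r"
      using fs_transform_diff_representable[OF rep[OF xy(1)] rep[OF xy(2)]] by blast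
    have "norm (\<Phi> x r - \<Phi> y r) \<le> fs_norm (\<lambda>r. \<Phi> x r - \<Phi> y r)"
      by (rule norm_le_fs_norm[OF mh]) (simp add: \<Phi> xy diff)
    with holder[OF xy] show ?thesis
      by linarith
  qed
  with \<alpha> show ?thesis
    by blast
qed

lemma in_G_bounded:
  assumes G: "in_G \<theta> S \<Phi> M H" and \<theta>: "0 \<le> \<theta>" "\<theta> \<le> 1" and x0: "x0 \<in> S"
  shows "\<exists>B. \<forall>x\<in>S. \<forall>r. norm (\<Phi> x r) \<le> B"
proof -
  obtain C \<alpha> where \<alpha>: "0 < \<alpha>"
    and holder: "\<And>x y r. x \<in> S \<Longrightarrow> y \<in> S \<Longrightarrow> norm (\<Phi> x r - \<Phi> y r) \<le> C * dtheta \<theta> x y powr \<alpha>"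
    using in_G_norm_diff_le[OF G] by blast
  have "norm (\<Phi> x r) \<le> measure (M x0) UNIV + \<bar>C\<bar>" if x: "x \<in> S" for x r
  proof -
    have "polar_rep (M x0) (H x0)" "\<Phi> x0 = fs_transform (M x0) (H x0)"
      using G x0 unfolding in_G_def by auto
    then have "norm (\<Phi> x0 r) \<le> measure (M x0) UNIV"
      by (simp add: norm_fs_transform_le)
    moreover have "C * dtheta \<theta> x x0 powr \<alpha> \<le> \<bar>C\<bar>"
    proof -
      have "dtheta \<theta> x x0 powr \<alpha> \<le> 1"
        using \<theta> \<alpha> dtheta_nonneg[of \<theta> x x0] dtheta_le_one[of \<theta> x x0] by (simp add: powr_le1)
      then have "\<bar>C\<bar> * dtheta \<theta> x x0 powr \<alpha> \<le> \<bar>C\<bar>"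
        by (intro mult_left_le) auto
      moreover have "C * dtheta \<theta> x x0 powr \<alpha> \<le> \<bar>C\<bar> * dtheta \<theta> x x0 powr \<alpha>"
        by (rule mult_right_mono) simp_all
      ultimately show ?thesis
        by linarith
    qed
    ultimately show ?thesis
      using holder[OF x x0, of r] norm_triangle_sub[of "\<Phi> x r" "\<Phi> x0 r"] by linarith
  qed
  then show ?thesis
    by blast
qed

lemma in_G_borel_measurable:
  assumes G: "in_G \<theta> S \<Phi> M H" and \<theta>: "0 < \<theta>" "\<theta> < 1"
  shows "(\<lambda>(x, r). \<Phi> x r) \<in> borel_measurable (shift_space S \<Otimes>\<^sub>M borel)"
proof -
  obtain C \<alpha> where \<alpha>: "0 < \<alpha>"
    and holder: "\<And>x y r. x \<in> S \<Longrightarrow> y \<in> S \<Longrightarrow> norm (\<Phi> x r - \<Phi> y r) \<le> C * dtheta \<theta> x y powr \<alpha>"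
    using in_G_norm_diff_le[OF G] by blast
  have "\<Phi> y \<in> borel_measurable borel" if "y \<in> S" for y
  proof -
    have "polar_rep (M y) (H y)" "\<Phi> y = fs_transform (M y) (H y)"
      using G that unfolding in_G_def by auto
    then show ?thesis
      by (simp add: borel_measurable_fs_transform)
  qed
  with holder show ?thesis
    by (intro borel_measurable_case_prod_if_holder[OF \<theta> \<alpha>]) (simp_all add: dist_norm)
qed

theorem lemma3p6:
  fixes k :: nat and A :: "nat \<Rightarrow> nat \<Rightarrow> bool" and \<theta> :: real
    and \<mu> :: "(int \<Rightarrow> nat) measure" and \<phi> :: "(int \<Rightarrow> nat) \<Rightarrow> real"
    and \<Phi> :: "(int \<Rightarrow> nat) \<Rightarrow> real \<Rightarrow> complex"
    and M :: "(int \<Rightarrow> nat) \<Rightarrow> real measure" and H :: "(int \<Rightarrow> nat) \<Rightarrow> real \<Rightarrow> complex"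
  assumes "topologically_mixing (sft k A)"
    and "gibbs_measure \<theta> (sft k A) \<mu> \<phi>"
    and "0 < \<theta>" and "\<theta> < 1"
    and "in_G \<theta> (sft k A) \<Phi> M H"
  shows "global_observable (\<mu> \<Otimes>\<^sub>M lborel) (\<lambda>(x, r). \<Phi> x r) \<and>
         nu_av (\<mu> \<Otimes>\<^sub>M lborel) (\<lambda>(x, r). \<Phi> x r) =
           (\<integral>x. H x 0 * complex_of_real (measure (M x) {0}) \<partial>\<mu>)"
proof -
  let ?S = "sft k A" and ?F = "\<lambda>(x, r). \<Phi> x r"
  have sets: "sets \<mu> = sets (shift_space ?S)" and space: "space \<mu> = ?S"
    and prob: "emeasure \<mu> (space \<mu>) = 1"
    using assms(2) unfolding gibbs_measure_def by auto
  interpret finite_measure \<mu>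
    using prob by (intro finite_measureI) simp
  obtain x0 where x0: "x0 \<in> ?S"
    using prob space by fastforce
  obtain B where B: "\<And>x r. x \<in> ?S \<Longrightarrow> norm (\<Phi> x r) \<le> B"
    using in_G_bounded[OF assms(5) less_imp_le[OF assms(3)] less_imp_le[OF assms(4)] x0] by blast
  have sets_\<nu>: "sets (\<mu> \<Otimes>\<^sub>M lborel) = sets (shift_space ?S \<Otimes>\<^sub>M borel)"
    using sets by (intro sets_pair_measure_cong) auto
  have meas: "?F \<in> borel_measurable (\<mu> \<Otimes>\<^sub>M lborel)"
    using in_G_borel_measurable[OF assms(5,3,4)] unfolding measurable_cong_sets[OF sets_\<nu> refl] .
  have bound: "norm (?F p) \<le> B" if "p \<in> space (\<mu> \<Otimes>\<^sub>M lborel)" for p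
    using that B by (auto simp: space_pair_measure space)
  have "(\<lambda>r. ?F (x, r)) = fs_transform (M x) (H x)" "polar_rep (M x) (H x)"
    if "x \<in> space \<mu>" for x
    using assms(5) that unfolding in_G_def space by auto
  then have "(window_mean (\<lambda>r. ?F (x, r)) \<longlongrightarrow> H x 0 * of_real (measure (M x) {0})) at_top"
    if "x \<in> space \<mu>" for x
    using that tendsto_window_mean_fs_transform by simp
  with meas bound have "(window_avg (\<mu> \<Otimes>\<^sub>M lborel) ?F \<longlongrightarrow> (\<integral>x. H x 0 * of_real (measure (M x) {0}) \<partial>\<mu>)) at_top"
    by (intro tendsto_window_avg finite_measure_axioms)
  with meas bound show ?thesis
    by (rule global_observable_nu_avI)
qed

end
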